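(* Let $N\ge 1$ and $d$ be integers and let $d_1,\dots,d_N,\rho_1,\dots,\rho_N$ be integers with $$0\le d_1<\rho_N\le d_2<\rho_{N-1}\le d_3<\dots\le d_N<\rho_1\le d .$$ Put $m=d-\sum_{l=1}^N\rho_l+\sum_{l=1}^N d_l$ and assume $m>0$. Let $$\mathcal L=\{d_1+1,\dots,\rho_N-1\}\cup\{d_2+1,\dots,\rho_{N-1}-1\}\cup\dots\cup\{d_N+1,\dots,\rho_1-1\}$$ (so $|\mathcal L|=d-m-N=:K$). Then there exist unique complex constants $C_1,\dots,C_K$ such that the polynomial $$P(x)=(x+1)^{m+N}+C_1(x+1)^{m+N+1}+\dots+C_K(x+1)^{d}$$ has zero coefficient of $x^l$ for every $l\in\mathcal L$; equivalently, the $K\times K$ linear system $\binom{m+N}{l_i}+\sum_{j=1}^{K}C_j\binom{m+N+j}{l_i}=0$, $1\le i\le K$ (where $l_1,\dots,l_K$ are the elements of $\mathcal L$), has nonzero determinant. *)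

theory Defs
  imports Complex_Main "HOL-Computational_Algebra.Polynomial"
begin

definition shifted_binom_poly :: "nat \<Rightarrow> nat \<Rightarrow> (nat \<Rightarrow> complex) \<Rightarrow> complex poly" where
  "shifted_binom_poly e K C =
     [:1, 1:] ^ e + (\<Sum>j=1..K. smult (C j) ([:1, 1:] ^ (e + j)))"

end

theory Submission
  imports Defs
begin

text \<open>With \<open>e = m + N\<close>, the interlacing makes \<open>L\<close> a set of \<open>K\<close> exponents in \<open>[0, e + K]\<close>.
  If the coefficients of \<open>P = c\<^sub>1 (x+1)^(e+1) + ... + c\<^sub>K (x+1)^(e+K)\<close> vanish on \<open>L\<close>, then \<open>P\<close>
  has at most \<open>e + 1\<close> nonzero terms but is divisible by \<open>(x+1)^(e+1)\<close>. A nonzero root of a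
  nonzero polynomial has multiplicity less than its number of terms, so \<open>P = 0\<close>, and all
  \<open>c\<^sub>j = 0\<close> because the powers of \<open>x + 1\<close> are linearly independent. Hence the \<open>K \<times> K\<close> system
  is injective, which gives uniqueness. For existence, a nontrivial solution \<open>c\<^sub>0, ..., c\<^sub>K\<close> of
  the homogeneous system with an extra unknown for \<open>(x+1)^e\<close> must have \<open>c\<^sub>0\<close> nonzero, and
  \<open>C\<^sub>j = c\<^sub>j / c\<^sub>0\<close>.\<close>

lemma homogeneous_linear_system_nontrivial_solution:
  fixes A :: "'i \<Rightarrow> 'v \<Rightarrow> 'a::field"
  assumes "finite E" "finite V" "card E < card V"
  shows "\<exists>x. (\<exists>v\<in>V. x v \<noteq> 0) \<and> (\<forall>i\<in>E. (\<Sum>v\<in>V. A i v * x v) = 0)"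
  using assms
proof (induction E arbitrary: V A rule: finite_induct)
  case empty
  then have "V \<noteq> {}" by auto
  then show ?case by (intro exI[of _ "\<lambda>_. 1"]) auto
next
  case (insert i E)
  show ?case
  proof (cases "\<forall>v\<in>V. A i v = 0")
    case True
    have "card E < card V" using insert.hyps insert.prems(2) by simp
    then obtain x where "\<exists>v\<in>V. x v \<noteq> 0" "\<forall>j\<in>E. (\<Sum>v\<in>V. A j v * x v) = 0"
      using insert.IH[OF insert.prems(1)] by blast
    with True show ?thesis by auto
  next
    case False
    then obtain w where w: "w \<in> V" "A i w \<noteq> 0" by auto
    define A' where "A' j v = A j v - A j w / A i w * A i v" for j v
    have "card E < card (V - {w})" using insert w by auto
    then obtain y where y: "\<exists>v\<in>V - {w}. y v \<noteq> 0"
      "\<forall>j\<in>E. (\<Sum>v\<in>V - {w}. A' j v * y v) = 0"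
      using insert.IH[of "V - {w}" A'] insert.prems(1) by auto
    define s where "s j = (\<Sum>v\<in>V - {w}. A j v * y v)" for j
    define x where "x = y(w := - s i / A i w)"
    have x_w: "x w = - s i / A i w" unfolding x_def by simp
    have row: "(\<Sum>v\<in>V. A j v * x v) = A j w * x w + s j" for j
    proof -
      have "(\<Sum>v\<in>V. A j v * x v) = A j w * x w + (\<Sum>v\<in>V - {w}. A j v * x v)"
        using insert.prems(1) w(1) by (simp add: sum.remove)
      also have "(\<Sum>v\<in>V - {w}. A j v * x v) = s j"
        unfolding s_def x_def by (intro sum.cong) auto
      finally show ?thesis .
    qed
    have "(\<Sum>v\<in>V - {w}. A' j v * y v) = s j - A j w / A i w * s i" for j
      unfolding A'_def s_def
      by (simp add: left_diff_distrib sum_subtractf sum_distrib_left mult.assoc)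
    then have "s j = A j w / A i w * s i" if "j \<in> E" for j
      using y(2) that by simp
    then have "\<forall>j\<in>insert i E. (\<Sum>v\<in>V. A j v * x v) = 0"
      using w(2) by (auto simp: row x_w)
    moreover have "\<exists>v\<in>V. x v \<noteq> 0" using y(1) unfolding x_def by auto
    ultimately show ?thesis by blast
  qed
qed

lemma power_dvd_pderiv:
  fixes p q :: "'a::{comm_semiring_1,semiring_no_zero_divisors} poly"
  assumes "q ^ Suc k dvd p"
  shows "q ^ k dvd pderiv p"
proof -
  obtain r where r: "p = q ^ Suc k * r" using assms by (elim dvdE)
  have "pderiv p = q ^ k * (smult (of_nat (Suc k)) (pderiv q) * r + q * pderiv r)"
    unfolding r pderiv_mult pderiv_power_Suc by (simp add: algebra_simps)
  then show ?thesis by simp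
qed

text \<open>The operator \<open>p \<mapsto> x p' - n p\<close> kills the monomial \<open>x\<^sup>n\<close>, rescales all others,
  and lowers the multiplicity of the root \<open>-a\<close> by at most one.\<close>
lemma sparse_poly_eq_0_if_power_dvd:
  fixes p :: "'a::{idom,ring_char_0} poly"
  assumes "a \<noteq> 0" "finite T" "\<And>n. n \<notin> T \<Longrightarrow> coeff p n = 0" "card T \<le> k"
    and "[:a, 1:] ^ k dvd p"
  shows "p = 0"
  using assms(2-)
proof (induction k arbitrary: p T)
  case 0
  then show ?case by (auto intro: poly_eqI)
next
  case (Suc k)
  show ?case
  proof (rule ccontr)
    assume "p \<noteq> 0"
    then obtain n where n: "coeff p n \<noteq> 0" by (meson leading_coeff_neq_0)
    with Suc.prems have "n \<in> T" by auto
    define q where "q = [:0, 1:] * pderiv p - smult (of_nat n) p"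
    have coeff_q: "coeff q i = (of_nat i - of_nat n) * coeff p i" for i
      by (cases i) (auto simp: q_def coeff_pderiv algebra_simps)
    have "[:a, 1:] ^ k dvd q"
    proof -
      have "[:a, 1:] ^ k dvd p" using Suc.prems(4) by (metis dvd_mult_left power_Suc2)
      then show ?thesis
        unfolding q_def using Suc.prems(4) by (intro dvd_diff dvd_mult power_dvd_pderiv dvd_smult)
    qed
    moreover have "coeff q i = 0" if "i \<notin> T - {n}" for i
      using Suc.prems(2) coeff_q that by auto
    moreover have "card (T - {n}) \<le> k" using Suc.prems(1,3) \<open>n \<in> T\<close> by auto
    ultimately have "q = 0" using Suc.IH Suc.prems(1) by blast
    then have "coeff p i = 0" if "i \<noteq> n" for i using coeff_q[of i] that by simp
    then have p_monom: "p = monom (coeff p n) n" by (intro poly_eqI) (simp add: coeff_monom)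
    have "[:a, 1:] dvd p" using Suc.prems(4) by (meson dvd_power dvd_trans zero_less_Suc)
    then have "poly p (-a) = 0" by (simp add: poly_eq_0_iff_dvd)
    moreover have "poly p (-a) \<noteq> 0" using n \<open>a \<noteq> 0\<close> by (subst p_monom) (simp add: poly_monom)
    ultimately show False by simp
  qed
qed

lemma smult_linear_powers_eq_0_imp_eq_0:
  fixes c :: "'i \<Rightarrow> 'a::comm_ring_1"
  assumes "finite J" "inj_on f J" "(\<Sum>j\<in>J. smult (c j) ([:a, 1:] ^ f j)) = 0" "i \<in> J"
  shows "c i = 0"
proof -
  have "pcompose [:a, 1:] [:-a, 1:] = [:0, 1:]" by (simp add: pcompose_pCons)
  then have "pcompose ([:a, 1:] ^ n) [:-a, 1:] = monom 1 n" for n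
    unfolding monom_altdef smult_1_left
    by (induction n) (simp_all only: power_0 power_Suc pcompose_mult pcompose_1)
  then have "(\<Sum>j\<in>J. monom (c j) (f j)) = 0"
    using arg_cong[OF assms(3), of "\<lambda>p. pcompose p [:-a, 1:]"]
    by (simp add: pcompose_sum pcompose_smult smult_monom)
  moreover have "coeff (\<Sum>j\<in>J. monom (c j) (f j)) (f i) = (\<Sum>j\<in>J. if j = i then c j else 0)"
    unfolding coeff_sum using assms(2,4) by (intro sum.cong) (auto simp: coeff_monom inj_on_eq_iff)
  ultimately show ?thesis using assms(1,4) by simp
qed

locale interlaced =
  fixes N :: nat and a b :: "nat \<Rightarrow> int"
  assumes below: "\<And>i. 1 \<le> i \<Longrightarrow> i \<le> N \<Longrightarrow> a i < b i"
    and above: "\<And>i. 1 \<le> i \<Longrightarrow> i < N \<Longrightarrow> b i \<le> a (i + 1)"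
begin

lemma upper_le_lower:
  assumes "1 \<le> i" "i < j" "j \<le> N"
  shows "b i \<le> a j"
  using assms
proof (induction j)
  case (Suc j)
  show ?case
  proof (cases "i = j")
    case False
    then have "b i \<le> a j" using Suc by simp
    also have "\<dots> < b j" using Suc False by (intro below) auto
    also have "\<dots> \<le> a (Suc j)" using Suc False above[of j] by simp
    finally show ?thesis by simp
  qed (use Suc above in simp)
qed simp

lemma intervals_disjoint:
  assumes "i \<in> {1..N}" "j \<in> {1..N}" "i \<noteq> j"
  shows "{a i + 1 .. b i - 1} \<inter> {a j + 1 .. b j - 1} = {}"
  using assms upper_le_lower[of i j] upper_le_lower[of j i] by (cases "i < j") auto

lemma card_UN_intervals:
  "int (card (\<Union>i\<in>{1..N}. {a i + 1 .. b i - 1})) = (\<Sum>i=1..N. b i - a i - 1)"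
proof -
  have "card (\<Union>i\<in>{1..N}. {a i + 1 .. b i - 1}) = (\<Sum>i=1..N. card {a i + 1 .. b i - 1})"
    using intervals_disjoint by (intro card_UN_disjoint) auto
  also have "int \<dots> = (\<Sum>i=1..N. b i - a i - 1)"
    using below by (auto intro: sum.cong)
  finally show ?thesis .
qed

lemma UN_intervals_subset: "(\<Union>i\<in>{1..N}. {a i + 1 .. b i - 1}) \<subseteq> {a 1 + 1 .. b N - 1}"
proof -
  have "a 1 \<le> a i \<and> b i \<le> b N" if "i \<in> {1..N}" for i
    using that below[of 1] below[of N] upper_le_lower[of 1 i] upper_le_lower[of i N]
    by (cases "i = 1"; cases "i = N") auto
  then show ?thesis by fastforce
qed

end

lemma binomial_power_system_injective:
  fixes c :: "nat \<Rightarrow> 'a::{idom,ring_char_0}"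
  assumes L: "L \<subseteq> {..e + K}" "K \<le> card L"
    and sol: "\<And>l. l \<in> L \<Longrightarrow> (\<Sum>j=1..K. c j * coeff ([:1, 1:] ^ (e + j)) l) = 0"
    and j: "j \<in> {1..K}"
  shows "c j = 0"
proof -
  define P where "P = (\<Sum>j=1..K. smult (c j) ([:1, 1:] ^ (e + j)))"
  have coeff_P: "coeff P l = (\<Sum>j=1..K. c j * coeff ([:1, 1:] ^ (e + j)) l)" for l
    by (simp add: P_def coeff_sum)
  have "[:1, 1:] ^ (e + 1) dvd P"
    unfolding P_def by (intro dvd_sum dvd_smult le_imp_power_dvd) auto
  moreover have "coeff P n = 0" if "n \<notin> {..e + K} - L" for n
  proof (cases "n \<in> L")
    case True
    then show ?thesis using sol by (simp add: coeff_P)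
  next
    case False
    have "degree P \<le> e + K"
      unfolding P_def by (intro degree_sum_le degree_smult_le[THEN order_trans])
        (auto simp: degree_linear_power)
    with False that show ?thesis by (intro coeff_eq_0) auto
  qed
  moreover have "card ({..e + K} - L) \<le> e + 1"
    using L by (simp add: card_Diff_subset finite_subset)
  ultimately have "P = 0"
    by (intro sparse_poly_eq_0_if_power_dvd[of 1 "{..e + K} - L" _ "e + 1"]) auto
  then show ?thesis
    using smult_linear_powers_eq_0_imp_eq_0[where J = "{1..K}" and f = "\<lambda>j. e + j"] j
    by (simp add: P_def)
qed

lemma coeff_shifted_binom_poly:
  "coeff (shifted_binom_poly e K C) l =
     coeff ([:1, 1:] ^ e) l + (\<Sum>j=1..K. C j * coeff ([:1, 1:] ^ (e + j)) l)"
  by (simp add: shifted_binom_poly_def coeff_sum)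

lemma shifted_binom_poly_unique:
  assumes L: "L \<subseteq> {..e + K}" "card L = K"
  shows "\<exists>!C. (\<forall>j. j \<notin> {1..K} \<longrightarrow> C j = 0) \<and>
              (\<forall>l\<in>L. coeff (shifted_binom_poly e K C) l = 0)"
proof (rule ex_ex1I)
  have "finite L" using L(1) finite_subset by blast
  then obtain x :: "nat \<Rightarrow> complex" where x: "\<exists>v\<in>{0..K}. x v \<noteq> 0"
    "\<forall>l\<in>L. (\<Sum>v\<in>{0..K}. coeff ([:1, 1:] ^ (e + v)) l * x v) = 0"
    using homogeneous_linear_system_nontrivial_solution[of L "{0..K}"
        "\<lambda>l v. coeff ([:1, 1:] ^ (e + v)) l"] L(2)
    by auto
  have row: "(\<Sum>v\<in>{0..K}. coeff ([:1, 1:] ^ (e + v)) l * x v) =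
      x 0 * coeff ([:1, 1:] ^ e) l + (\<Sum>j=1..K. x j * coeff ([:1, 1:] ^ (e + j)) l)" for l
    by (simp add: sum.atLeast_Suc_atMost mult.commute)
  have "x 0 \<noteq> 0"
  proof
    assume "x 0 = 0"
    then have "x j = 0" if "j \<in> {1..K}" for j
      using binomial_power_system_injective[OF L(1), of x] x(2) row L(2) that by simp
    with \<open>x 0 = 0\<close> x(1) show False by (metis Suc_leI atLeastAtMost_iff neq0_conv One_nat_def)
  qed
  define C where "C j = (if j \<in> {1..K} then x j / x 0 else 0)" for j
  have C_sol: "coeff (shifted_binom_poly e K C) l = 0" if "l \<in> L" for l
  proof -
    have "coeff (shifted_binom_poly e K C) l =
        (\<Sum>v\<in>{0..K}. coeff ([:1, 1:] ^ (e + v)) l * x v) / x 0"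
      unfolding coeff_shifted_binom_poly row using \<open>x 0 \<noteq> 0\<close>
      by (simp add: C_def add_divide_distrib sum_divide_distrib)
    with x(2) that show ?thesis by simp
  qed
  moreover have "C j = 0" if "j \<notin> {1..K}" for j
    using that unfolding C_def by auto
  ultimately show "\<exists>C. (\<forall>j. j \<notin> {1..K} \<longrightarrow> C j = 0) \<and>
      (\<forall>l\<in>L. coeff (shifted_binom_poly e K C) l = 0)"
    by blast
next
  fix C1 C2 :: "nat \<Rightarrow> complex"
  assume C1: "(\<forall>j. j \<notin> {1..K} \<longrightarrow> C1 j = 0) \<and> (\<forall>l\<in>L. coeff (shifted_binom_poly e K C1) l = 0)"
    and C2: "(\<forall>j. j \<notin> {1..K} \<longrightarrow> C2 j = 0) \<and> (\<forall>l\<in>L. coeff (shifted_binom_poly e K C2) l = 0)"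
  have "(\<Sum>j=1..K. (C1 j - C2 j) * coeff ([:1, 1:] ^ (e + j)) l) =
      coeff (shifted_binom_poly e K C1) l - coeff (shifted_binom_poly e K C2) l" for l
    by (simp add: coeff_shifted_binom_poly left_diff_distrib sum_subtractf)
  then have diff: "C1 j - C2 j = 0" if "j \<in> {1..K}" for j
    using binomial_power_system_injective[OF L(1), of "\<lambda>j. C1 j - C2 j"] C1 C2 L(2) that
    by simp
  show "C1 = C2"
  proof
    fix j
    show "C1 j = C2 j" using C1 C2 diff[of j] by (cases "j \<in> {1..K}") simp_all
  qed
qed

theorem mainTheorem4:
  fixes N :: nat and d :: int and dd rho :: "nat \<Rightarrow> int"
  assumes N_pos: "N \<ge> 1"
    and d1_nonneg: "0 \<le> dd 1"
    and chain1: "\<And>i. 1 \<le> i \<Longrightarrow> i \<le> N \<Longrightarrow> dd i < rho (N + 1 - i)"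
    and chain2: "\<And>i. 1 \<le> i \<Longrightarrow> i < N \<Longrightarrow> rho (N + 1 - i) \<le> dd (i + 1)"
    and rho1_le: "rho 1 \<le> d"
    and m_pos: "d - (\<Sum>l=1..N. rho l) + (\<Sum>l=1..N. dd l) > 0"
  shows "let m = d - (\<Sum>l=1..N. rho l) + (\<Sum>l=1..N. dd l);
             L = (\<Union>i\<in>{1..N}. {dd i + 1 .. rho (N + 1 - i) - 1});
             K = nat (d - m - int N)
         in \<exists>!C :: nat \<Rightarrow> complex. (\<forall>j. j \<notin> {1..K} \<longrightarrow> C j = 0) \<and>
               (\<forall>l\<in>L. coeff (shifted_binom_poly (nat (m + int N)) K C) (nat l) = 0)"
proof -
  define m where "m = d - (\<Sum>l=1..N. rho l) + (\<Sum>l=1..N. dd l)"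
  define L where "L = (\<Union>i\<in>{1..N}. {dd i + 1 .. rho (N + 1 - i) - 1})"
  define K where "K = nat (d - m - int N)"
  define e where "e = nat (m + int N)"
  interpret interlaced N dd "\<lambda>i. rho (N + 1 - i)"
    using chain1 chain2 by unfold_locales
  have "int (card L) = (\<Sum>i=1..N. rho (N + 1 - i) - dd i - 1)"
    unfolding L_def by (rule card_UN_intervals)
  also have "\<dots> = (\<Sum>l=1..N. rho l) - (\<Sum>l=1..N. dd l) - int N"
    using sum.atLeastAtMost_rev[of rho 1 N] by (simp add: sum_subtractf)
  finally have card_L: "card L = K" and d_eq: "nat d = e + K"
    using m_pos by (simp_all add: K_def e_def m_def)
  have "L \<subseteq> {dd 1 + 1 .. rho 1 - 1}"
    unfolding L_def using UN_intervals_subset N_pos by simp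
  then have L_nonneg: "0 \<le> l" and L_le: "l \<le> d" if "l \<in> L" for l
    using that d1_nonneg rho1_le by force+
  have "inj_on nat L" by (rule inj_onI) (metis L_nonneg eq_nat_nat_iff)
  moreover have "nat ` L \<subseteq> {..e + K}" using L_le by (auto simp flip: d_eq intro: nat_mono)
  ultimately have "\<exists>!C. (\<forall>j. j \<notin> {1..K} \<longrightarrow> C j = 0) \<and>
      (\<forall>n\<in>nat ` L. coeff (shifted_binom_poly e K C) n = 0)"
    using card_L by (intro shifted_binom_poly_unique) (simp_all add: card_image)
  then show ?thesis
    unfolding Let_def m_def[symmetric] L_def[symmetric] K_def[symmetric] e_def[symmetric] by simp
qed

end
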